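(* Let $q\ge2$, $n\ge1$, $X=\{0,\ldots,q-1\}$, and let $\mathcal{L}=\{L_1,\ldots,L_k\}$ be a partition of $X^n$ with respect to which the Insect Markov chain on $X^n$ is lumpable. Then there exists a subgroup $K\le Aut(T_{q,n})$ such that the orbits of $K$ on $X^n$ are exactly the parts $L_1,\ldots,L_k$.
   Context: $X^n$ is identified with the set of leaves (boundary) of the rooted $q$-ary tree $T_{q,n}$ of depth $n$, whose vertices are the words of length $\le n$ over $X$. $Aut(T_{q,n})$ (the iterated wreath product $Sym(q)\wr\cdots\wr Sym(q)$, $n$ factors) is the group of permutations $g$ of $X^n$ such that for all $x,y\in X^n$ and $m\le n$, $x_1\cdots x_m=y_1\cdots y_m$ iff $(gx)_1\cdots(gx)_m=(gy)_1\cdots(gy)_m$. For $x,y\in X^n$, $d(x,y)=n-\max\{m: x_1\cdots x_m=y_1\cdots y_m\}$. Set $\alpha_j=\frac{q^j-1}{q^{j+1}-1}$ for $1\le j\le n-1$, $\alpha_n=0$. The Insect Markov chain on $X^n$ has transition probabilities $p(x,y)=q^{-1}(1-\alpha_1)+\sum_{i=2}^nq^{-i}\alpha_1\cdots\alpha_{i-1}(1-\alpha_i)$ if $d(x,y)\in\{0,1\}$ and $p(x,y)=\sum_{i=j}^nq^{-i}\alpha_1\cdots\alpha_{i-1}(1-\alpha_i)$ if $d(x,y)=j>1$. A chain is lumpable with respect to a partition if for all parts $L,L'$ the map $x\mapsto\sum_{y\in L'}p(x,y)$ is constant on $L$. *)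

theory Defs
  imports Complex_Main "HOL-Algebra.Bij" "HOL-Library.Disjoint_Sets"
begin

definition words :: "nat \<Rightarrow> nat \<Rightarrow> nat list set" where
  "words q n = {x. length x = n \<and> set x \<subseteq> {0..<q}}"

(* Aut(T_{q,n}): permutations of X^n preserving common-prefix relations;
   permutations are represented extensionally (identity outside X^n), as in Bij *)
definition tree_aut :: "nat \<Rightarrow> nat \<Rightarrow> (nat list \<Rightarrow> nat list) set" where
  "tree_aut q n = {g \<in> Bij (words q n).
     \<forall>x\<in>words q n. \<forall>y\<in>words q n. \<forall>m\<le>n.
       (take m x = take m y \<longleftrightarrow> take m (g x) = take m (g y))}"

definition tree_aut_group :: "nat \<Rightarrow> nat \<Rightarrow> (nat list \<Rightarrow> nat list) monoid" where
  "tree_aut_group q n = (BijGroup (words q n)) \<lparr>carrier := tree_aut q n\<rparr>"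

definition tree_dist :: "nat \<Rightarrow> nat list \<Rightarrow> nat list \<Rightarrow> nat" where
  "tree_dist n x y = n - (GREATEST m. m \<le> n \<and> take m x = take m y)"

definition alpha :: "nat \<Rightarrow> nat \<Rightarrow> nat \<Rightarrow> real" where
  "alpha q n j = (if j < n then (real q ^ j - 1) / (real q ^ (j + 1) - 1) else 0)"

definition insect_term :: "nat \<Rightarrow> nat \<Rightarrow> nat \<Rightarrow> real" where
  "insect_term q n i = (1 / real q ^ i) * (\<Prod>j\<in>{1..<i}. alpha q n j) * (1 - alpha q n i)"

definition insect_p :: "nat \<Rightarrow> nat \<Rightarrow> nat list \<Rightarrow> nat list \<Rightarrow> real" where
  "insect_p q n x y =
     (if tree_dist n x y \<in> {0, 1}
      then (1 / real q) * (1 - alpha q n 1) + (\<Sum>i=2..n. insect_term q n i)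
      else (\<Sum>i=tree_dist n x y..n. insect_term q n i))"

definition lumpable :: "nat \<Rightarrow> nat \<Rightarrow> nat list set set \<Rightarrow> bool" where
  "lumpable q n P \<longleftrightarrow>
     (\<forall>L\<in>P. \<forall>L'\<in>P. \<forall>x\<in>L. \<forall>x'\<in>L.
        (\<Sum>y\<in>L'. insect_p q n x y) = (\<Sum>y\<in>L'. insect_p q n x' y))"

definition orbits :: "(nat list \<Rightarrow> nat list) set \<Rightarrow> nat list set \<Rightarrow> nat list set set" where
  "orbits K S = {{g x | g. g \<in> K} | x. x \<in> S}"

end

theory Submission
  imports Defs
begin

(* Lumpability says that the Insect operator M f x = (SUM y. p x y * f y) maps functions constant
   on the parts to functions constant on the parts. M is a combination, with positive weights, of
   the operators E_m averaging over the subtrees of level m. These are nested,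
   E_a (E_b f) = E_(min a b) f, so M acts on the increments E_m f - E_(m-1) f by pairwise distinct
   eigenvalues, and a Vandermonde argument shows that every E_m preserves constancy on the parts.
   For indicators of parts this means: if x and x' lie in the same part, then the subtrees below
   take m x and take m x' contain equally many leaves of every part. These counts let us match the
   children of take m x and take m x' bijectively, part by part, and so build from the leaves
   upwards a tree automorphism fixing every part and mapping x to x'. Hence the part-preserving
   automorphisms form a subgroup whose orbits are exactly the parts. *)

section \<open>Subgroups of permutations preserving a relation\<close>

lemma subgroup_BijGroup_invariant:
  "subgroup {g \<in> Bij S. \<forall>x\<in>S. \<forall>y\<in>S. R (g x) (g y) = R x y} (BijGroup S)"
  (is "subgroup ?K _")
proof (rule group.subgroupI[OF group_BijGroup])
  show "?K \<subseteq> carrier (BijGroup S)"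
    by (auto simp: BijGroup_def)
  show "?K \<noteq> {}"
    using id_Bij[of S] by auto
next
  fix g assume g: "g \<in> ?K"
  then have gB: "g \<in> Bij S" by simp
  have inv_mem: "inv_into S g x \<in> S" and g_inv: "g (inv_into S g x) = x" if "x \<in> S" for x
    using that gB Bij_inv_into_mem[OF gB] by (auto simp: Bij_def bij_betw_def f_inv_into_f)
  have "R (inv_into S g x) (inv_into S g y) = R x y" if "x \<in> S" "y \<in> S" for x y
    using g inv_mem[OF that(1)] inv_mem[OF that(2)] g_inv[OF that(1)] g_inv[OF that(2)] by force
  then have "restrict (inv_into S g) S \<in> ?K"
    using restrict_inv_into_Bij[OF gB] by simp
  then show "inv\<^bsub>BijGroup S\<^esub> g \<in> ?K"
    by (simp add: inv_BijGroup[OF gB])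
next
  fix g h assume g: "g \<in> ?K" and h: "h \<in> ?K"
  have "h x \<in> S" if "x \<in> S" for x
    using h that Bij_imp_funcset by blast
  then have "compose S g h \<in> ?K"
    using g h compose_Bij[of g S h] by (auto simp: compose_def)
  then show "g \<otimes>\<^bsub>BijGroup S\<^esub> h \<in> ?K"
    using g h by (simp add: BijGroup_def)
qed

lemma tree_aut_eq_invariant:
  "tree_aut q n = {g \<in> Bij (words q n). \<forall>x\<in>words q n. \<forall>y\<in>words q n.
     {m. m \<le> n \<and> take m (g x) = take m (g y)} = {m. m \<le> n \<and> take m x = take m y}}"
  unfolding tree_aut_def by (auto simp: set_eq_iff)

lemma tree_aut_subgroup: "subgroup (tree_aut q n) (BijGroup (words q n))"
  unfolding tree_aut_eq_invariant by (rule subgroup_BijGroup_invariant)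

section \<open>Words, fibres and power sums\<close>

lemma take_eq_take_le: "take b y = take b z \<Longrightarrow> a \<le> b \<Longrightarrow> take a y = take a z"
  by (metis min.absorb1 take_take)

lemma words_eq_lists: "words q n = {xs. set xs \<subseteq> {0..<q} \<and> length xs = n}"
  by (auto simp: words_def)

lemma finite_words: "finite (words q n)"
  by (simp add: words_eq_lists finite_lists_length_eq)

lemma card_words: "card (words q n) = q ^ n"
  by (simp add: words_eq_lists card_lists_length_eq)

lemma card_words_with_prefix:
  assumes x: "x \<in> words q n" and m: "m \<le> n"
  shows "card {y \<in> words q n. take m y = take m x} = q ^ (n - m)"
proof -
  let ?u = "take m x"
  have "{y \<in> words q n. take m y = ?u} = (\<lambda>v. ?u @ v) ` words q (n - m)"
  proof (intro equalityI subsetI)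
    fix y assume "y \<in> {y \<in> words q n. take m y = ?u}"
    then have "y = ?u @ drop m y" and "drop m y \<in> words q (n - m)"
      by (auto simp: words_def dest: in_set_dropD) (metis append_take_drop_id)
    then show "y \<in> (\<lambda>v. ?u @ v) ` words q (n - m)" by blast
  next
    fix y assume "y \<in> (\<lambda>v. ?u @ v) ` words q (n - m)"
    then show "y \<in> {y \<in> words q n. take m y = ?u}"
      using x m by (fastforce simp: words_def dest: in_set_takeD)
  qed
  moreover have "inj_on (\<lambda>v. ?u @ v) (words q (n - m))" by (simp add: inj_on_def)
  ultimately show ?thesis by (simp add: card_image card_words)
qed

lemma ex_bij_betw_fixing:
  assumes "finite A" "finite B" "card A = card B" "a0 \<in> A" "b0 \<in> B"
  shows "\<exists>t. bij_betw t A B \<and> t a0 = b0"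
proof -
  obtain t where t: "bij_betw t (A - {a0}) (B - {b0})"
    using assms by (metis card_Diff_singleton finite_Diff finite_same_card_bij)
  have "bij_betw (\<lambda>x. if x \<in> A - {a0} then t x else b0) ((A - {a0}) \<union> {a0}) ((B - {b0}) \<union> {b0})"
    by (rule bij_betw_disjoint_Un[OF t]) auto
  then show ?thesis
    using assms by (intro exI[of _ "\<lambda>x. if x \<in> A - {a0} then t x else b0"]) (simp add: insert_absorb)
qed

lemma ex_bij_betw_fibres:
  assumes A: "finite A" and B: "finite B"
    and fibres: "\<And>c. card {a\<in>A. f a = c} = card {b\<in>B. g b = c}"
    and a0: "a0 \<in> A" and b0: "b0 \<in> B" and "f a0 = g b0"
  shows "\<exists>\<sigma>. bij_betw \<sigma> A B \<and> (\<forall>a\<in>A. g (\<sigma> a) = f a) \<and> \<sigma> a0 = b0"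
proof -
  have "\<exists>t. bij_betw t {a\<in>A. f a = c} {b\<in>B. g b = c} \<and> (c = f a0 \<longrightarrow> t a0 = b0)" for c
  proof (cases "c = f a0")
    case True
    then show ?thesis
      using ex_bij_betw_fixing[of "{a\<in>A. f a = c}" "{b\<in>B. g b = c}" a0 b0] fibres[of c]
        A B a0 b0 \<open>f a0 = g b0\<close>
      by auto
  next
    case False
    then show ?thesis
      using finite_same_card_bij[OF _ _ fibres] A B by simp
  qed
  then obtain t where t_all: "\<forall>c. bij_betw (t c) {a\<in>A. f a = c} {b\<in>B. g b = c} \<and>
      (c = f a0 \<longrightarrow> t c a0 = b0)"
    using choice[of "\<lambda>c t. bij_betw t {a\<in>A. f a = c} {b\<in>B. g b = c} \<and> (c = f a0 \<longrightarrow> t a0 = b0)"]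
    by blast
  then have t: "\<And>c. bij_betw (t c) {a\<in>A. f a = c} {b\<in>B. g b = c}" and t0: "t (f a0) a0 = b0"
    by simp_all
  define \<sigma> where "\<sigma> a = t (f a) a" for a
  have "bij_betw \<sigma> (\<Union>c. {a\<in>A. f a = c}) (\<Union>c. {b\<in>B. g b = c})"
  proof (rule bij_betw_UNION_disjoint)
    show "disjoint_family_on (\<lambda>c. {b\<in>B. g b = c}) UNIV"
      by (auto simp: disjoint_family_on_def)
    show "bij_betw \<sigma> {a\<in>A. f a = c} {b\<in>B. g b = c}" for c
      using t[of c] by (rule bij_betw_cong[THEN iffD1, rotated]) (simp add: \<sigma>_def)
  qed
  moreover have "(\<Union>c. {a\<in>A. f a = c}) = A" "(\<Union>c. {b\<in>B. g b = c}) = B"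
    by auto
  ultimately have "bij_betw \<sigma> A B"
    by simp
  moreover have "g (\<sigma> a) = f a" if "a \<in> A" for a
    using t[of "f a"] that by (auto simp: \<sigma>_def bij_betw_def)
  moreover have "\<sigma> a0 = b0"
    using t0 by (simp add: \<sigma>_def)
  ultimately show ?thesis
    by blast
qed

(* Vandermonde elimination: F (Suc r) - l j0 * F r is again a power sum, with the component of j0
   removed and the others rescaled by l j - l j0. *)
lemma components_of_closed_power_sums:
  fixes l :: "'j \<Rightarrow> 'b::field" and w :: "'j \<Rightarrow> 'a \<Rightarrow> 'b"
  assumes lin: "\<And>g h a b. C g \<Longrightarrow> C h \<Longrightarrow> C (\<lambda>x. a * g x + b * h x)"
    and "finite J" and "inj_on l J"
    and "\<And>r. C (\<lambda>x. \<Sum>j\<in>J. l j ^ r * w j x)"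
  shows "\<forall>j\<in>J. C (w j)"
  using assms(2-)
proof (induction J arbitrary: w rule: finite_induct)
  case empty
  then show ?case by simp
next
  case (insert j0 J)
  let ?F = "\<lambda>r x. \<Sum>j\<in>insert j0 J. l j ^ r * w j x"
  have scale: "C (\<lambda>x. a * g x)" if "C g" for a g
    using lin[OF that that, of a 0] by simp
  have sum: "C (\<lambda>x. \<Sum>j\<in>J. w j x)" if "\<forall>j\<in>J. C (w j)"
    using insert.hyps(1) that
  proof (induction J rule: finite_induct)
    case empty
    then show ?case using scale[OF insert.prems(2)[of 0], of 0] by simp
  next
    case (insert j J)
    then show ?case using lin[of "w j" "\<lambda>x. \<Sum>j\<in>J. w j x" 1 1] by simp
  qed
  define w' where "w' j x = (l j - l j0) * w j x" for j x
  have "C (\<lambda>x. \<Sum>j\<in>J. l j ^ r * w' j x)" for r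
  proof -
    have "C (\<lambda>x. 1 * ?F (Suc r) x + (- l j0) * ?F r x)"
      by (rule lin) (rule insert.prems(2))+
    also have "(\<lambda>x. 1 * ?F (Suc r) x + (- l j0) * ?F r x) = (\<lambda>x. \<Sum>j\<in>J. l j ^ r * w' j x)"
    proof
      fix x
      have "1 * ?F (Suc r) x + (- l j0) * ?F r x = (\<Sum>j\<in>insert j0 J. l j ^ r * w' j x)"
        unfolding w'_def sum_distrib_left sum.distrib[symmetric]
        by (intro sum.cong refl) (simp add: algebra_simps)
      also have "\<dots> = (\<Sum>j\<in>J. l j ^ r * w' j x)"
        using insert.hyps by (simp add: w'_def)
      finally show "1 * ?F (Suc r) x + (- l j0) * ?F r x = (\<Sum>j\<in>J. l j ^ r * w' j x)" .
    qed
    finally show ?thesis .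
  qed
  then have w': "\<forall>j\<in>J. C (w' j)"
    using insert.IH insert.prems(1) by (simp add: inj_on_insert)
  have wJ: "\<forall>j\<in>J. C (w j)"
  proof
    fix j assume j: "j \<in> J"
    then have "l j \<noteq> l j0" using insert.prems(1) insert.hyps(2) by (auto simp: inj_on_def)
    have "C (\<lambda>x. (1 / (l j - l j0)) * w' j x)"
      using scale w' j by blast
    also have "(\<lambda>x. (1 / (l j - l j0)) * w' j x) = w j"
      using \<open>l j \<noteq> l j0\<close> by (simp add: w'_def fun_eq_iff)
    finally show "C (w j)" .
  qed
  have "C (\<lambda>x. 1 * ?F 0 x + (-1) * (\<Sum>j\<in>J. w j x))"
    by (rule lin[OF insert.prems(2) sum[OF wJ]])
  also have "(\<lambda>x. 1 * ?F 0 x + (-1) * (\<Sum>j\<in>J. w j x)) = w j0"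
    using insert.hyps by (simp add: fun_eq_iff)
  finally have "C (w j0)" .
  then show ?case using wJ by simp
qed

section \<open>Averaging over subtrees and the spectrum of the Insect chain\<close>

locale word_tree =
  fixes q n :: nat
  assumes q_ge_2: "q \<ge> 2" and n_pos: "n \<ge> 1"
begin

abbreviation W where "W \<equiv> words q n"

definition block :: "nat \<Rightarrow> nat list \<Rightarrow> nat list set" where
  "block m x = {y \<in> W. take m y = take m x}"

definition avg :: "nat \<Rightarrow> (nat list \<Rightarrow> real) \<Rightarrow> nat list \<Rightarrow> real" where
  "avg m f x = (\<Sum>y\<in>block m x. f y) / real q ^ (n - m)"

lemma finite_block [simp]: "finite (block m x)"
  using finite_words by (simp add: block_def)

lemma card_block: "x \<in> W \<Longrightarrow> m \<le> n \<Longrightarrow> card (block m x) = q ^ (n - m)"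
  using card_words_with_prefix by (simp add: block_def)

lemma q_power_pos: "real q ^ k > 0"
  using q_ge_2 by simp

lemma block_eq: "z \<in> block a x \<Longrightarrow> b \<le> a \<Longrightarrow> block b z = block b x"
  by (auto simp: block_def dest: take_eq_take_le)

lemma block_swap:
  "y \<in> block b z \<Longrightarrow> z \<in> W \<Longrightarrow> a \<le> b \<Longrightarrow> y \<in> block a x \<longleftrightarrow> z \<in> block a x"
  "y \<in> block b z \<Longrightarrow> z \<in> W \<Longrightarrow> z \<in> block b y"
  by (auto simp: block_def dest: take_eq_take_le)

lemma Sigma_block_swap:
  assumes "a \<le> b"
  shows "Sigma (block a x) (block b) = prod.swap ` Sigma (block a x) (block b)"
proof (intro equalityI subsetI)
  fix p assume "p \<in> Sigma (block a x) (block b)"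
  then obtain z y where "p = (z, y)" "z \<in> block a x" "y \<in> block b z" "z \<in> W"
    by (auto simp: block_def)
  then show "p \<in> prod.swap ` Sigma (block a x) (block b)"
    using block_swap[of y b z] assms by (auto simp: image_iff)
next
  fix p assume "p \<in> prod.swap ` Sigma (block a x) (block b)"
  then obtain z y where "p = (z, y)" "y \<in> block a x" "z \<in> block b y" "y \<in> W"
    by (auto simp: block_def)
  then show "p \<in> Sigma (block a x) (block b)"
    using block_swap[of z b y] assms by auto
qed

lemma sum_avg_block:
  assumes "a \<le> b" "b \<le> n"
  shows "(\<Sum>z\<in>block a x. avg b f z) = (\<Sum>y\<in>block a x. f y)"
proof -
  have "(\<Sum>z\<in>block a x. \<Sum>y\<in>block b z. f y) = (\<Sum>(z, y)\<in>Sigma (block a x) (block b). f y)"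
    by (rule sum.Sigma) auto
  also have "\<dots> = (\<Sum>(y, z)\<in>Sigma (block a x) (block b). f y)"
    by (subst Sigma_block_swap[OF assms(1)], subst sum.reindex) (auto simp: case_prod_beta)
  also have "\<dots> = (\<Sum>y\<in>block a x. real (card (block b y)) * f y)"
    by (subst sum.Sigma[symmetric]) auto
  also have "\<dots> = (\<Sum>y\<in>block a x. real q ^ (n - b) * f y)"
    using assms card_block by (intro sum.cong refl) (simp add: block_def)
  finally show ?thesis
    using q_ge_2 by (simp add: avg_def flip: sum_divide_distrib sum_distrib_left)
qed

lemma avg_avg:
  assumes x: "x \<in> W" and "a \<le> n" "b \<le> n"
  shows "avg a (avg b f) x = avg (min a b) f x"
proof (cases "a \<le> b")
  case True
  then show ?thesis
    using assms unfolding avg_def[of a "avg b f" x] sum_avg_block[OF True \<open>b \<le> n\<close>]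
    by (simp add: avg_def)
next
  case False
  then have "(\<Sum>z\<in>block a x. avg b f z) = real (card (block a x)) * avg b f x"
    by (simp add: avg_def block_eq)
  then show ?thesis
    using False assms card_block[OF x] q_power_pos[of "n - a"] by (simp add: avg_def)
qed

lemma dist_le_iff:
  assumes x: "x \<in> W" and y: "y \<in> W" and i: "i \<le> n"
  shows "tree_dist n x y \<le> i \<longleftrightarrow> take (n - i) x = take (n - i) y"
proof -
  let ?Q = "\<lambda>m. m \<le> n \<and> take m x = take m y"
  have Q: "?Q (Greatest ?Q)"
    by (rule GreatestI_nat[of ?Q 0 n]) auto
  have "take (n - i) x = take (n - i) y \<longleftrightarrow> n - i \<le> Greatest ?Q"
  proof
    assume "take (n - i) x = take (n - i) y"
    then show "n - i \<le> Greatest ?Q" by (intro Greatest_le_nat[of ?Q _ n]) auto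
  next
    assume "n - i \<le> Greatest ?Q"
    then show "take (n - i) x = take (n - i) y" using Q take_eq_take_le by blast
  qed
  moreover have "tree_dist n x y \<le> i \<longleftrightarrow> n - i \<le> Greatest ?Q"
    using Q i unfolding tree_dist_def by linarith
  ultimately show ?thesis by simp
qed

lemma insect_p_eq_sum:
  assumes x: "x \<in> W" and y: "y \<in> W"
  shows "insect_p q n x y =
    (\<Sum>i=1..n. if take (n - i) x = take (n - i) y then insect_term q n i else 0)"
proof -
  let ?d = "tree_dist n x y"
  have "(\<Sum>i=1..n. if take (n - i) x = take (n - i) y then insect_term q n i else 0) =
        (\<Sum>i=1..n. if ?d \<le> i then insect_term q n i else 0)"
    by (intro sum.cong refl) (simp add: dist_le_iff[OF x y])
  also have "\<dots> = (\<Sum>i\<in>{i\<in>{1..n}. ?d \<le> i}. insect_term q n i)"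
    by (simp only: sum.inter_filter[OF finite_atLeastAtMost])
  also have "{i\<in>{1..n}. ?d \<le> i} = {max 1 ?d..n}" by auto
  finally have sum_eq: "(\<Sum>i=1..n. if take (n - i) x = take (n - i) y then insect_term q n i else 0) =
        (\<Sum>i=max 1 ?d..n. insect_term q n i)" .
  show ?thesis
  proof (cases "?d \<in> {0, 1}")
    case True
    have "(\<Sum>i=1..n. insect_term q n i) = insect_term q n 1 + (\<Sum>i=2..n. insect_term q n i)"
      using n_pos by (simp add: sum.atLeast_Suc_atMost numeral_2_eq_2)
    then show ?thesis
      using True sum_eq by (auto simp: insect_p_def insect_term_def)
  next
    case False
    then show ?thesis using sum_eq by (simp add: insect_p_def max_def)
  qed
qed

definition insect_op :: "(nat list \<Rightarrow> real) \<Rightarrow> nat list \<Rightarrow> real" where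
  "insect_op f x = (\<Sum>y\<in>W. insect_p q n x y * f y)"

definition level_weight :: "nat \<Rightarrow> real" where
  "level_weight m = insect_term q n (n - m) * real q ^ (n - m)"

lemma insect_op_eq_sum_avg:
  assumes x: "x \<in> W"
  shows "insect_op f x = (\<Sum>m<n. level_weight m * avg m f x)"
proof -
  have "insect_op f x = (\<Sum>y\<in>W. \<Sum>i=1..n.
          insect_term q n i * (if take (n - i) y = take (n - i) x then f y else 0))"
    unfolding insect_op_def
  proof (rule sum.cong[OF refl])
    fix y assume "y \<in> W"
    show "insect_p q n x y * f y = (\<Sum>i=1..n.
          insect_term q n i * (if take (n - i) y = take (n - i) x then f y else 0))"
      unfolding insect_p_eq_sum[OF x \<open>y \<in> W\<close>] sum_distrib_right by (rule sum.cong) auto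
  qed
  also have "\<dots> = (\<Sum>i=1..n. insect_term q n i * (\<Sum>y\<in>block (n - i) x. f y))"
    by (subst sum.swap) (simp add: block_def sum.inter_filter finite_words flip: sum_distrib_left)
  also have "\<dots> = (\<Sum>i=1..n. level_weight (n - i) * avg (n - i) f x)"
    using q_ge_2 by (intro sum.cong refl) (auto simp: level_weight_def avg_def)
  also have "\<dots> = (\<Sum>m<n. level_weight m * avg m f x)"
    by (rule sum.reindex_bij_witness[where i = "\<lambda>m. n - m" and j = "\<lambda>i. n - i"]) auto
  finally show ?thesis .
qed

lemma insect_op_sum: "insect_op (\<lambda>y. \<Sum>j\<in>J. c j * h j y) x = (\<Sum>j\<in>J. c j * insect_op (h j) x)"
  unfolding insect_op_def sum_distrib_left sum_distrib_right
  by (subst sum.swap) (simp add: mult.left_commute mult.assoc)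

lemma alpha_pos: "1 \<le> j \<Longrightarrow> j < n \<Longrightarrow> alpha q n j > 0"
proof -
  assume j: "1 \<le> j" "j < n"
  have "real q > 1" using q_ge_2 by simp
  then have "real q ^ j > 1" "real q ^ (j + 1) > 1"
    using j by (simp_all only: one_less_power)
  then show ?thesis using j by (simp add: alpha_def)
qed

lemma alpha_less_1: "alpha q n j < 1"
proof -
  have "real q ^ j < real q ^ (j + 1)" "real q ^ j \<ge> 1"
    using q_ge_2 by (simp_all add: power_strict_increasing)
  then show ?thesis by (simp add: alpha_def)
qed

lemma insect_term_pos: "1 \<le> i \<Longrightarrow> i \<le> n \<Longrightarrow> insect_term q n i > 0"
  unfolding insect_term_def using q_ge_2 alpha_pos alpha_less_1[of i]
  by (intro mult_pos_pos prod_pos) auto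

lemma level_weight_pos: "m < n \<Longrightarrow> level_weight m > 0"
  unfolding level_weight_def using insect_term_pos[of "n - m"] q_power_pos[of "n - m"]
  by (simp add: mult_pos_pos)

definition avg_increment :: "(nat list \<Rightarrow> real) \<Rightarrow> nat \<Rightarrow> nat list \<Rightarrow> real" where
  "avg_increment f m x = (if m = 0 then avg 0 f x else avg m f x - avg (m - 1) f x)"

lemma sum_avg_increment: "(\<Sum>m\<le>k. avg_increment f m x) = avg k f x"
  by (induction k) (auto simp: avg_increment_def)

lemma avg_full:
  assumes "x \<in> W"
  shows "avg n f x = f x"
proof -
  have "block n x = {x}"
    using assms by (auto simp: block_def words_def)
  then show ?thesis by (simp add: avg_def)
qed

lemma avg_diff: "avg m (\<lambda>y. g y - h y) x = avg m g x - avg m h x"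
  by (simp add: avg_def sum_subtractf diff_divide_distrib)

lemma avg_avg_increment:
  assumes x: "x \<in> W" and "k \<le> n" "m \<le> n"
  shows "avg k (avg_increment f m) x = (if m \<le> k then avg_increment f m x else 0)"
proof (cases "m = 0")
  case True
  then show ?thesis
    using avg_avg[OF assms(1,2), of 0] by (simp add: avg_increment_def[abs_def])
next
  case False
  then have "avg k (avg_increment f m) x = avg (min k m) f x - avg (min k (m - 1)) f x"
    using avg_avg[OF assms] avg_avg[OF assms(1,2), of "m - 1"] assms(3)
    by (simp add: avg_increment_def[abs_def] avg_diff)
  then show ?thesis
    using False by (auto simp: avg_increment_def min_def)
qed

definition eigenvalue :: "nat \<Rightarrow> real" where
  "eigenvalue m = (\<Sum>k=m..<n. level_weight k)"

lemma insect_op_avg_increment: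
  assumes x: "x \<in> W" and m: "m \<le> n"
  shows "insect_op (avg_increment f m) x = eigenvalue m * avg_increment f m x"
proof -
  have "insect_op (avg_increment f m) x = (\<Sum>k<n. if m \<le> k then level_weight k * avg_increment f m x else 0)"
    unfolding insect_op_eq_sum_avg[OF x] by (intro sum.cong refl) (simp add: avg_avg_increment[OF x _ m])
  also have "\<dots> = (\<Sum>k=m..<n. level_weight k * avg_increment f m x)"
    by (simp add: sum.inter_filter[symmetric]) (intro sum.cong; auto)
  finally show ?thesis by (simp add: eigenvalue_def sum_distrib_right)
qed

lemma inj_on_eigenvalue: "inj_on eigenvalue {..n}"
proof -
  have "eigenvalue m' < eigenvalue m" if "m < m'" "m' \<le> n" for m m'
  proof -
    have "eigenvalue m = (\<Sum>k=m..<m'. level_weight k) + eigenvalue m'"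
      unfolding eigenvalue_def using that by (simp add: sum.atLeastLessThan_concat)
    moreover have "(\<Sum>k=m..<m'. level_weight k) > 0"
      using that level_weight_pos by (intro sum_pos) auto
    ultimately show ?thesis by simp
  qed
  then have "strict_antimono_on {..n} eigenvalue"
    by (intro monotone_onI) auto
  then show ?thesis by (simp add: strict_antimono_iff_antimono)
qed

definition subtree :: "nat list \<Rightarrow> nat list set" where
  "subtree u = {y \<in> W. take (length u) y = u}"

lemma subtree_take: "x \<in> W \<Longrightarrow> x \<in> subtree (take m x)"
  by (simp add: subtree_def words_def min_def)

lemma subtree_full: "x \<in> W \<Longrightarrow> subtree x = {x}"
  by (auto simp: subtree_def words_def)

lemma take_subtree: "z \<in> subtree w \<Longrightarrow> j \<le> length w \<Longrightarrow> take j z = take j w"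
  unfolding subtree_def by (metis (mono_tags, lifting) mem_Collect_eq take_eq_take_le take_take min.absorb1)

lemma nth_word_less: "z \<in> W \<Longrightarrow> m < n \<Longrightarrow> z ! m < q"
  unfolding words_def using nth_mem by fastforce

lemma take_Suc_word: "z \<in> W \<Longrightarrow> m < n \<Longrightarrow> take (Suc m) z = take m z @ [z ! m]"
  by (simp add: take_Suc_conv_app_nth words_def)

lemma subtree_snoc_iff:
  assumes "length w = m" "m < n"
  shows "z \<in> subtree (w @ [b]) \<longleftrightarrow> z \<in> subtree w \<and> z ! m = b"
  using assms take_Suc_word[of z m] by (auto simp: subtree_def)

lemma subtree_eq_UN_children:
  assumes "length w = m" "m < n"
  shows "subtree w = (\<Union>b<q. subtree (w @ [b]))"
  using assms subtree_snoc_iff[OF assms] nth_word_less by (auto simp: subtree_def)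

definition prefix_iso :: "(nat list \<Rightarrow> nat list) \<Rightarrow> nat list \<Rightarrow> nat list \<Rightarrow> bool" where
  "prefix_iso h u v \<longleftrightarrow> bij_betw h (subtree u) (subtree v) \<and>
     (\<forall>y\<in>subtree u. \<forall>z\<in>subtree u. \<forall>j\<le>n. take j (h y) = take j (h z) \<longleftrightarrow> take j y = take j z)"

lemma bij_betw_glue:
  assumes lu: "length u = m" and lv: "length v = m" and m: "m < n"
    and \<sigma>: "bij_betw \<sigma> {..<q} {..<q}"
    and H: "\<And>a. a < q \<Longrightarrow> bij_betw (H a) (subtree (u @ [a])) (subtree (v @ [\<sigma> a]))"
  shows "bij_betw (\<lambda>y. H (y ! m) y) (subtree u) (subtree v)"
proof -
  have "bij_betw (\<lambda>y. H (y ! m) y) (\<Union>a<q. subtree (u @ [a])) (\<Union>a<q. subtree (v @ [\<sigma> a]))"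
  proof (rule bij_betw_UNION_disjoint)
    show "disjoint_family_on (\<lambda>a. subtree (v @ [\<sigma> a])) {..<q}"
      using \<sigma> subtree_snoc_iff[OF lv m]
      by (auto simp: disjoint_family_on_def bij_betw_def dest: inj_onD)
    show "bij_betw (\<lambda>y. H (y ! m) y) (subtree (u @ [a])) (subtree (v @ [\<sigma> a]))" if "a \<in> {..<q}" for a
    proof -
      have "bij_betw (H a) (subtree (u @ [a])) (subtree (v @ [\<sigma> a]))"
        using H that by simp
      then show ?thesis
        by (rule bij_betw_cong[THEN iffD1, rotated]) (simp add: subtree_snoc_iff[OF lu m])
    qed
  qed
  moreover have "(\<Union>a<q. subtree (v @ [\<sigma> a])) = (\<Union>b<q. subtree (v @ [b]))"
    using \<sigma> by (auto simp: bij_betw_def image_iff) (metis imageE lessThan_iff)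
  ultimately show ?thesis
    by (simp flip: subtree_eq_UN_children[OF lu m] subtree_eq_UN_children[OF lv m])
qed

lemma prefix_iso_glue:
  assumes lu: "length u = m" and lv: "length v = m" and m: "m < n"
    and \<sigma>: "bij_betw \<sigma> {..<q} {..<q}"
    and H: "\<And>a. a < q \<Longrightarrow> prefix_iso (H a) (u @ [a]) (v @ [\<sigma> a])"
  shows "prefix_iso (\<lambda>y. H (y ! m) y) u v"
proof -
  let ?h = "\<lambda>y. H (y ! m) y"
  have child: "y ! m < q \<and> y \<in> subtree (u @ [y ! m])" if "y \<in> subtree u" for y
    using that subtree_snoc_iff[OF lu m] nth_word_less[OF _ m] by (auto simp: subtree_def)
  have image: "?h y \<in> subtree v \<and> ?h y ! m = \<sigma> (y ! m)" if "y \<in> subtree u" for y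
  proof -
    have "?h y \<in> subtree (v @ [\<sigma> (y ! m)])"
      using H[of "y ! m"] child[OF that] by (auto simp: prefix_iso_def bij_betw_def)
    then show ?thesis using subtree_snoc_iff[OF lv m] by blast
  qed
  have "take j (?h y) = take j (?h z) \<longleftrightarrow> take j y = take j z"
    if y: "y \<in> subtree u" and z: "z \<in> subtree u" and j: "j \<le> n" for y z j
  proof (cases "y ! m = z ! m")
    case True
    then show ?thesis
      using H[of "y ! m"] child[OF y] child[OF z] j by (simp add: prefix_iso_def)
  next
    case False
    then have "?h y ! m \<noteq> ?h z ! m"
      using image[OF y] image[OF z] child[OF y] child[OF z] \<sigma> by (auto simp: bij_betw_def dest: inj_onD)
    show ?thesis
    proof (cases "j \<le> m")
      case True
      then show ?thesis
        using take_subtree[OF y] take_subtree[OF z] image[OF y] image[OF z] take_subtree lu lv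
        by metis
    next
      case False
      then have "take j y ! m = y ! m" "take j z ! m = z ! m"
        "take j (?h y) ! m = ?h y ! m" "take j (?h z) ! m = ?h z ! m" by simp_all
      then show ?thesis
        using \<open>y ! m \<noteq> z ! m\<close> \<open>?h y ! m \<noteq> ?h z ! m\<close> by metis
    qed
  qed
  moreover have "bij_betw ?h (subtree u) (subtree v)"
    using H by (intro bij_betw_glue[OF lu lv m \<sigma>]) (simp add: prefix_iso_def)
  ultimately show ?thesis by (simp add: prefix_iso_def)
qed

end

section \<open>Lumpable partitions\<close>

locale lumpable_partition = word_tree +
  fixes P :: "nat list set set"
  assumes partition: "partition_on W P" and lumpable: "lumpable q n P"
begin

lemma part_subset: "L \<in> P \<Longrightarrow> L \<subseteq> W"
  using partition by (auto simp: partition_on_def)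

lemma part_nonempty: "L \<in> P \<Longrightarrow> L \<noteq> {}"
  using partition by (auto simp: partition_on_def)

lemma Union_parts: "\<Union>P = W"
  using partition by (simp add: partition_on_def)

lemma part_unique: "L \<in> P \<Longrightarrow> L' \<in> P \<Longrightarrow> x \<in> L \<Longrightarrow> x \<in> L' \<Longrightarrow> L = L'"
  using partition disjointD[of P L L'] by (auto simp: partition_on_def)

lemma finite_part: "L \<in> P \<Longrightarrow> finite L"
  using part_subset finite_words finite_subset by blast

lemma finite_parts: "finite P"
  using finite_words[of q n] by (simp add: finite_UnionD flip: Union_parts)

definition constant_on_parts :: "(nat list \<Rightarrow> real) \<Rightarrow> bool" where
  "constant_on_parts g \<longleftrightarrow> (\<forall>L\<in>P. \<forall>x\<in>L. \<forall>y\<in>L. g x = g y)"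

lemma constant_on_partsD: "constant_on_parts g \<Longrightarrow> L \<in> P \<Longrightarrow> x \<in> L \<Longrightarrow> y \<in> L \<Longrightarrow> g x = g y"
  unfolding constant_on_parts_def by blast

lemma constant_on_parts_lin:
  assumes "constant_on_parts g" "constant_on_parts h"
  shows "constant_on_parts (\<lambda>x. a * g x + b * h x)"
  unfolding constant_on_parts_def
proof (intro ballI)
  fix L x y assume "L \<in> P" "x \<in> L" "y \<in> L"
  with assms[THEN constant_on_partsD] have "g x = g y" "h x = h y" by blast+
  then show "a * g x + b * h x = a * g y + b * h y" by simp
qed

lemma constant_on_parts_sum:
  assumes "finite J" "\<And>j. j \<in> J \<Longrightarrow> constant_on_parts (h j)"
  shows "constant_on_parts (\<lambda>x. \<Sum>j\<in>J. h j x)"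
  unfolding constant_on_parts_def
proof (intro ballI)
  fix L x y assume "L \<in> P" "x \<in> L" "y \<in> L"
  with assms(2)[THEN constant_on_partsD] show "(\<Sum>j\<in>J. h j x) = (\<Sum>j\<in>J. h j y)"
    by (intro sum.cong) blast+
qed

lemma constant_on_parts_cong:
  assumes "constant_on_parts g" "\<And>x. x \<in> W \<Longrightarrow> g x = h x"
  shows "constant_on_parts h"
  unfolding constant_on_parts_def
proof (intro ballI)
  fix L x y assume "L \<in> P" "x \<in> L" "y \<in> L"
  moreover from this have "x \<in> W" "y \<in> W" using part_subset by blast+
  ultimately show "h x = h y" using assms constant_on_partsD by metis
qed

lemma constant_on_parts_insect_op:
  assumes g: "constant_on_parts g"
  shows "constant_on_parts (insect_op g)"
  unfolding constant_on_parts_def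
proof (intro ballI)
  fix L0 x x' assume L0: "L0 \<in> P" and x: "x \<in> L0" and x': "x' \<in> L0"
  have part_sum: "(\<Sum>y\<in>L. insect_p q n x y * g y) = (\<Sum>y\<in>L. insect_p q n x' y * g y)"
    if L: "L \<in> P" for L
  proof -
    obtain y0 where y0: "y0 \<in> L" using part_nonempty[OF L] by blast
    then have "g y = g y0" if "y \<in> L" for y
      using g L that unfolding constant_on_parts_def by blast
    then have "(\<Sum>y\<in>L. insect_p q n z y * g y) = (\<Sum>y\<in>L. insect_p q n z y) * g y0" for z
      by (simp add: sum_distrib_right)
    moreover have "(\<Sum>y\<in>L. insect_p q n x y) = (\<Sum>y\<in>L. insect_p q n x' y)"
      using lumpable L0 x x' L unfolding lumpable_def by blast
    ultimately show ?thesis by simp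
  qed
  have "\<forall>A\<in>P. \<forall>B\<in>P. A \<noteq> B \<longrightarrow> A \<inter> B = {}"
    using part_unique by blast
  then have "insect_op g z = (\<Sum>L\<in>P. \<Sum>y\<in>L. insect_p q n z y * g y)" for z
    unfolding insect_op_def Union_parts[symmetric] using finite_part by (simp add: sum.Union_disjoint)
  then show "insect_op g x = insect_op g x'"
    using part_sum by simp
qed

lemma constant_on_parts_avg:
  assumes f: "constant_on_parts f" and k: "k \<le> n"
  shows "constant_on_parts (avg k f)"
proof -
  have power_sums: "constant_on_parts (\<lambda>x. \<Sum>m\<in>{..n}. eigenvalue m ^ r * avg_increment f m x)" for r
  proof (induction r)
    case 0
    show ?case
      using f by (rule constant_on_parts_cong) (simp add: sum_avg_increment avg_full)
  next
    case (Suc r)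
    then show ?case
    proof (rule constant_on_parts_insect_op[THEN constant_on_parts_cong])
      fix x assume x: "x \<in> W"
      show "insect_op (\<lambda>x. \<Sum>m\<in>{..n}. eigenvalue m ^ r * avg_increment f m x) x =
            (\<Sum>m\<in>{..n}. eigenvalue m ^ Suc r * avg_increment f m x)"
        unfolding insect_op_sum by (intro sum.cong refl) (simp add: insect_op_avg_increment[OF x])
    qed
  qed
  have "\<forall>m\<in>{..n}. constant_on_parts (avg_increment f m)"
    by (rule components_of_closed_power_sums[OF constant_on_parts_lin _ inj_on_eigenvalue power_sums])
      simp_all
  then have "constant_on_parts (\<lambda>x. \<Sum>m\<le>k. avg_increment f m x)"
    using k by (intro constant_on_parts_sum) auto
  then show ?thesis
    by (simp add: sum_avg_increment)
qed

definition prefix_count :: "nat list \<Rightarrow> nat list set \<Rightarrow> nat" where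
  "prefix_count u L = card (L \<inter> subtree u)"

(* Restricted to P, so that profiles can be compared as functions. *)
definition child_profile :: "nat list \<Rightarrow> nat \<Rightarrow> nat list set \<Rightarrow> nat" where
  "child_profile u b = (\<lambda>L\<in>P. prefix_count (u @ [b]) L)"

lemma prefix_count_take_eq:
  assumes L0: "L0 \<in> P" and x: "x \<in> L0" and x': "x' \<in> L0" and L: "L \<in> P" and k: "k \<le> n"
  shows "prefix_count (take k x) L = prefix_count (take k x') L"
proof -
  define f where "f y = (if y \<in> L then 1 else 0 :: real)" for y
  have "constant_on_parts f"
    unfolding constant_on_parts_def
  proof (intro ballI)
    fix L1 y z assume "L1 \<in> P" "y \<in> L1" "z \<in> L1"
    then have "y \<in> L \<longleftrightarrow> z \<in> L" using L part_unique by blast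
    then show "f y = f z" by (simp add: f_def)
  qed
  then have "avg k f x = avg k f x'"
    using L0 x x' by (intro constant_on_partsD[OF constant_on_parts_avg[OF _ k]])
  moreover have "avg k f z = prefix_count (take k z) L / real q ^ (n - k)" if "z \<in> W" for z
  proof -
    have "subtree (take k z) = block k z"
      using that k by (auto simp: subtree_def block_def words_def min_def)
    then show ?thesis
      by (simp add: avg_def f_def prefix_count_def sum.If_cases Int_commute)
  qed
  moreover have "x \<in> W" "x' \<in> W"
    using part_subset[OF L0] x x' by auto
  ultimately show ?thesis
    using q_ge_2 by simp
qed

lemma child_profile_eq:
  assumes L: "L \<in> P" and m: "length w = m" "length w' = m" "m < n"
    and y: "y \<in> L \<inter> subtree (w @ [b])" and y': "y' \<in> L \<inter> subtree (w' @ [b'])"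
  shows "child_profile w b = child_profile w' b'"
proof -
  have "take (Suc m) y = w @ [b]" "take (Suc m) y' = w' @ [b']"
    using y y' m by (auto simp: subtree_def)
  moreover have "prefix_count (take (Suc m) y) L' = prefix_count (take (Suc m) y') L'"
    if "L' \<in> P" for L'
    using prefix_count_take_eq[OF L _ _ that] y y' m by simp
  ultimately show ?thesis
    unfolding child_profile_def by (intro restrict_ext) simp
qed

lemma prefix_count_children:
  assumes "length w = m" "m < n"
  shows "prefix_count w L = (\<Sum>b<q. prefix_count (w @ [b]) L)"
proof -
  have "L \<inter> subtree w = (\<Union>b<q. L \<inter> subtree (w @ [b]))"
    using subtree_eq_UN_children[OF assms] by blast
  moreover have "finite (L \<inter> subtree (w @ [b]))" for b
    using finite_words by (simp add: subtree_def)
  moreover have "subtree (w @ [a]) \<inter> subtree (w @ [b]) = {}" if "a \<noteq> b" for a b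
    using subtree_snoc_iff[OF assms] that by auto
  ultimately show ?thesis
    unfolding prefix_count_def by (simp only:) (rule card_UN_disjoint; blast)
qed

lemma prefix_count_pos_iff: "prefix_count u L > 0 \<longleftrightarrow> (\<exists>y. y \<in> L \<inter> subtree u)"
  using finite_words by (auto simp: prefix_count_def card_gt_0_iff subtree_def)

lemma child_profile_pos:
  assumes w: "w \<in> words q m" and m: "m < n" and b: "b < q"
  shows "\<exists>L\<in>P. child_profile w b L > 0"
proof -
  let ?y = "w @ [b] @ replicate (n - Suc m) 0"
  have y: "?y \<in> W" "?y \<in> subtree (w @ [b])"
    using w m b q_ge_2 by (auto simp: words_def subtree_def)
  then obtain L where "L \<in> P" "?y \<in> L"
    using Union_parts by blast
  then show ?thesis
    using y prefix_count_pos_iff[of "w @ [b]" L] by (auto simp: child_profile_def)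
qed

(* A part on which the profile c is positive meets only children with profile c. *)
lemma sum_prefix_count_profile:
  fixes a :: nat
  assumes w: "length w = m" and u: "length u = m" and m: "m < n"
  defines "c \<equiv> child_profile u a"
  defines "S \<equiv> {L\<in>P. c L > 0}"
  shows "(\<Sum>L\<in>S. prefix_count w L) = card {b\<in>{..<q}. child_profile w b = c} * (\<Sum>L\<in>S. c L)"
proof -
  have children: "(\<Sum>L\<in>S. prefix_count (w @ [b]) L) = (if child_profile w b = c then \<Sum>L\<in>S. c L else 0)"
    for b
  proof (cases "child_profile w b = c")
    case True
    then show ?thesis
      by (auto simp: S_def child_profile_def intro!: sum.cong)
  next
    case False
    have "prefix_count (w @ [b]) L = 0" if L: "L \<in> S" for L
    proof (rule ccontr)
      assume "prefix_count (w @ [b]) L \<noteq> 0"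
      then obtain y where "y \<in> L \<inter> subtree (w @ [b])"
        using prefix_count_pos_iff by blast
      moreover obtain y0 where "y0 \<in> L \<inter> subtree (u @ [a])"
        using L prefix_count_pos_iff by (auto simp: S_def c_def child_profile_def)
      ultimately have "child_profile w b = c"
        unfolding c_def using L w u m by (intro child_profile_eq) (auto simp: S_def)
      then show False using False by simp
    qed
    then show ?thesis using False by simp
  qed
  have "(\<Sum>L\<in>S. prefix_count w L) = (\<Sum>b<q. \<Sum>L\<in>S. prefix_count (w @ [b]) L)"
    using prefix_count_children[OF w m] by (simp add: sum.swap[of _ S])
  also have "\<dots> = (\<Sum>b<q. if child_profile w b = c then \<Sum>L\<in>S. c L else 0)"
    by (simp only: children)
  also have "\<dots> = (\<Sum>b\<in>{b\<in>{..<q}. child_profile w b = c}. \<Sum>L\<in>S. c L)"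
    by (rule sum.inter_filter[symmetric]) simp
  finally show ?thesis by simp
qed

lemma card_children_profile_eq:
  assumes u: "u \<in> words q m" and v: "v \<in> words q m" and m: "m < n"
    and counts: "\<forall>L\<in>P. prefix_count u L = prefix_count v L"
  shows "card {a\<in>{..<q}. child_profile u a = c} = card {b\<in>{..<q}. child_profile v b = c}"
proof -
  have profile_case: "card {a\<in>{..<q}. child_profile u a = c} = card {b\<in>{..<q}. child_profile v b = c}"
    if c: "c = child_profile u0 a0" and u0: "u0 \<in> words q m" and a0: "a0 < q" for u0 a0
  proof -
    let ?S = "{L\<in>P. c L > 0}"
    obtain L where "L \<in> P" "c L > 0"
      using child_profile_pos[OF u0 m a0] c by blast
    then have "(\<Sum>L\<in>?S. c L) > 0"
      using finite_parts by (intro sum_pos2[of _ L]) auto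
    moreover have "(\<Sum>L\<in>?S. prefix_count u L) = (\<Sum>L\<in>?S. prefix_count v L)"
      using counts by simp
    ultimately show ?thesis
      using sum_prefix_count_profile[of u m u0 a0] sum_prefix_count_profile[of v m u0 a0]
        u v u0 c m by (simp add: words_def)
  qed
  show ?thesis
  proof (cases "\<exists>a0<q. child_profile u a0 = c \<or> child_profile v a0 = c")
    case True
    then show ?thesis
      using profile_case u v by auto
  next
    case False
    then have "{a\<in>{..<q}. child_profile u a = c} = {}" "{b\<in>{..<q}. child_profile v b = c} = {}"
      by auto
    then show ?thesis by (simp only:)
  qed
qed

section \<open>Part-preserving automorphisms\<close>

definition part_iso :: "(nat list \<Rightarrow> nat list) \<Rightarrow> nat list \<Rightarrow> nat list \<Rightarrow> bool" where
  "part_iso h u v \<longleftrightarrow> prefix_iso h u v \<and> (\<forall>y\<in>subtree u. \<forall>L\<in>P. h y \<in> L \<longleftrightarrow> y \<in> L)"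

lemma part_iso_glue:
  assumes lu: "length u = m" and lv: "length v = m" and m: "m < n"
    and \<sigma>: "bij_betw \<sigma> {..<q} {..<q}"
    and H: "\<And>a. a < q \<Longrightarrow> part_iso (H a) (u @ [a]) (v @ [\<sigma> a])"
  shows "part_iso (\<lambda>y. H (y ! m) y) u v"
proof -
  have "prefix_iso (\<lambda>y. H (y ! m) y) u v"
    using H by (intro prefix_iso_glue[OF lu lv m \<sigma>]) (simp add: part_iso_def)
  moreover have "H (y ! m) y \<in> L \<longleftrightarrow> y \<in> L" if "y \<in> subtree u" "L \<in> P" for y L
  proof -
    have "y ! m < q" "y \<in> subtree (u @ [y ! m])"
      using that subtree_snoc_iff[OF lu m] nth_word_less[OF _ m] by (auto simp: subtree_def)
    then show ?thesis
      using H[of "y ! m"] \<open>L \<in> P\<close> by (auto simp: part_iso_def)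
  qed
  ultimately show ?thesis
    by (simp add: part_iso_def)
qed

lemma part_iso_leaf:
  assumes "L0 \<in> P" "x \<in> L0" "x' \<in> L0"
  shows "part_iso (\<lambda>_. x') x x'"
proof -
  have x: "x \<in> W" and x': "x' \<in> W"
    using assms part_subset by auto
  moreover have "x' \<in> L \<longleftrightarrow> x \<in> L" if "L \<in> P" for L
    using assms part_unique that by blast
  ultimately show ?thesis
    by (simp add: part_iso_def prefix_iso_def subtree_full bij_betw_def)
qed

lemma ex_bij_matching_children:
  assumes L0: "L0 \<in> P" and x: "x \<in> L0" and x': "x' \<in> L0" and m: "m < n"
  shows "\<exists>\<sigma>. bij_betw \<sigma> {..<q} {..<q} \<and> \<sigma> (x ! m) = x' ! m \<and>
    (\<forall>a<q. child_profile (take m x') (\<sigma> a) = child_profile (take m x) a)"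
proof -
  let ?u = "take m x" and ?v = "take m x'"
  have W: "x \<in> W" "x' \<in> W"
    using L0 x x' part_subset by auto
  then have uv: "?u \<in> words q m" "?v \<in> words q m"
    using m by (auto simp: words_def dest: in_set_takeD)
  then have len: "length ?u = m" "length ?v = m"
    by (simp_all add: words_def)
  have "x \<in> L0 \<inter> subtree (?u @ [x ! m])" "x' \<in> L0 \<inter> subtree (?v @ [x' ! m])"
    unfolding take_Suc_word[OF W(1) m, symmetric] take_Suc_word[OF W(2) m, symmetric]
    using x x' W subtree_take by auto
  then have profile_x: "child_profile ?u (x ! m) = child_profile ?v (x' ! m)"
    by (rule child_profile_eq[OF L0 len m])
  have "\<forall>L\<in>P. prefix_count ?u L = prefix_count ?v L"
    using prefix_count_take_eq[OF L0 x x'] m by simp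
  then have fibres: "card {a\<in>{..<q}. child_profile ?u a = c} = card {b\<in>{..<q}. child_profile ?v b = c}"
    for c
    by (rule card_children_profile_eq[OF uv m])
  show ?thesis
    using ex_bij_betw_fibres[OF _ _ fibres _ _ profile_x] nth_word_less[OF W(1) m]
      nth_word_less[OF W(2) m]
    by auto
qed

lemma ex_common_part_children:
  assumes u: "u \<in> words q m" and m: "m < n" and a: "a < q"
    and profile: "child_profile v b = child_profile u a"
  shows "\<exists>L\<in>P. \<exists>y y'. y \<in> L \<inter> subtree (u @ [a]) \<and> y' \<in> L \<inter> subtree (v @ [b])"
proof -
  obtain L where L: "L \<in> P" and pos: "child_profile u a L > 0"
    using child_profile_pos[OF u m a] by blast
  have "prefix_count (u @ [a]) L > 0"
    using L pos by (simp add: child_profile_def)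
  moreover have "prefix_count (v @ [b]) L > 0"
    using L pos unfolding profile[symmetric] by (simp add: child_profile_def)
  ultimately show ?thesis
    using L unfolding prefix_count_pos_iff by blast
qed

(* Built from the leaves upwards: the children of take m x and take m x' are matched by
   their profiles, and isomorphisms between matched children are glued together. *)
lemma ex_part_iso:
  assumes "m \<le> n" "L0 \<in> P" "x \<in> L0" "x' \<in> L0"
  shows "\<exists>h. part_iso h (take m x) (take m x') \<and> h x = x'"
  using assms
proof (induction m arbitrary: L0 x x' rule: inc_induct)
  case base
  then have "take n x = x" "take n x' = x'"
    using part_subset by (auto simp: words_def)
  then show ?case
    using part_iso_leaf[OF base] by auto
next
  case (step m)
  let ?u = "take m x" and ?v = "take m x'"
  have W: "x \<in> W" "x' \<in> W"
    using step.prems part_subset by auto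
  have len: "length ?u = m" "length ?v = m"
    using W step.hyps by (simp_all add: words_def)
  obtain \<sigma> where \<sigma>: "bij_betw \<sigma> {..<q} {..<q}" and \<sigma>_x: "\<sigma> (x ! m) = x' ! m"
    and \<sigma>_profile: "\<And>a. a < q \<Longrightarrow> child_profile ?v (\<sigma> a) = child_profile ?u a"
    using ex_bij_matching_children[OF step.prems step.hyps(2)] by blast
  have "\<exists>h. part_iso h (?u @ [a]) (?v @ [\<sigma> a]) \<and> (a = x ! m \<longrightarrow> h x = x')" if a: "a < q" for a
  proof (cases "a = x ! m")
    case True
    then show ?thesis
      using step.IH[OF step.prems] take_Suc_word[OF _ step.hyps(2)] W \<sigma>_x by auto
  next
    case False
    have "?u \<in> words q m"
      using W step.hyps by (auto simp: words_def dest: in_set_takeD)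
    then obtain L y y' where "L \<in> P" "y \<in> L \<inter> subtree (?u @ [a])" "y' \<in> L \<inter> subtree (?v @ [\<sigma> a])"
      using ex_common_part_children[OF _ step.hyps(2) a \<sigma>_profile[OF a]] by blast
    moreover from this have "take (Suc m) y = ?u @ [a]" "take (Suc m) y' = ?v @ [\<sigma> a]"
      using len by (auto simp: subtree_def)
    ultimately show ?thesis
      using step.IH[of L y y'] False by auto
  qed
  then obtain H where "\<And>a. a < q \<Longrightarrow> part_iso (H a) (?u @ [a]) (?v @ [\<sigma> a]) \<and> (a = x ! m \<longrightarrow> H a x = x')"
    by metis
  then have "part_iso (\<lambda>y. H (y ! m) y) ?u ?v" "H (x ! m) x = x'"
    using part_iso_glue[OF len step.hyps(2) \<sigma>] nth_word_less[OF W(1)] step.hyps by auto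
  then show ?case by blast
qed

definition part_aut :: "(nat list \<Rightarrow> nat list) set" where
  "part_aut = {g \<in> tree_aut q n. \<forall>x\<in>W. \<forall>L\<in>P. g x \<in> L \<longleftrightarrow> x \<in> L}"

lemma part_aut_eq_invariant:
  "part_aut = {g \<in> Bij W. \<forall>x\<in>W. \<forall>y\<in>W.
     ({m. m \<le> n \<and> take m (g x) = take m (g y)}, {L\<in>P. g x \<in> L}) =
     ({m. m \<le> n \<and> take m x = take m y}, {L\<in>P. x \<in> L})}"
  unfolding part_aut_def tree_aut_eq_invariant by blast

lemma subgroup_part_aut: "subgroup part_aut (tree_aut_group q n)"
  unfolding tree_aut_group_def
proof (rule group.subgroup_incl[OF group_BijGroup _ tree_aut_subgroup])
  show "subgroup part_aut (BijGroup W)"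
    unfolding part_aut_eq_invariant by (rule subgroup_BijGroup_invariant)
  show "part_aut \<subseteq> tree_aut q n"
    by (auto simp: part_aut_def)
qed

lemma ex_part_aut_map:
  assumes "L \<in> P" "x \<in> L" "x' \<in> L"
  shows "\<exists>g\<in>part_aut. g x = x'"
proof -
  obtain h where h: "part_iso h [] []" "h x = x'"
    using ex_part_iso[where m = 0, OF _ assms] by auto
  have W: "subtree [] = W"
    by (simp add: subtree_def)
  have "restrict h W \<in> Bij W"
    using h W by (simp add: Bij_def part_iso_def prefix_iso_def bij_betw_restrict_eq)
  then have "restrict h W \<in> part_aut"
    using h W by (auto simp: part_aut_def tree_aut_def part_iso_def prefix_iso_def)
  moreover have "restrict h W x = x'"
    using assms h part_subset by auto
  ultimately show ?thesis by blast
qed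

lemma orbits_part_aut: "orbits part_aut W = P"
proof -
  have orbit: "{g x | g. g \<in> part_aut} = L" if "L \<in> P" "x \<in> L" for L x
  proof
    show "{g x | g. g \<in> part_aut} \<subseteq> L"
      using that part_subset by (auto simp: part_aut_def)
    show "L \<subseteq> {g x | g. g \<in> part_aut}"
      using ex_part_aut_map[OF that] by blast
  qed
  show ?thesis
  proof
    show "orbits part_aut W \<subseteq> P"
    proof
      fix X assume "X \<in> orbits part_aut W"
      then obtain x where x: "x \<in> W" "X = {g x | g. g \<in> part_aut}"
        unfolding orbits_def by blast
      then obtain L where "L \<in> P" "x \<in> L"
        using Union_parts by blast
      then show "X \<in> P"
        using orbit x(2) by simp
    qed
    show "P \<subseteq> orbits part_aut W"
    proof
      fix L assume L: "L \<in> P"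
      then obtain x where x: "x \<in> L"
        using part_nonempty by blast
      then have "x \<in> W" "L = {g x | g. g \<in> part_aut}"
        using L part_subset orbit by auto
      then show "L \<in> orbits part_aut W"
        unfolding orbits_def by blast
    qed
  qed
qed

end

theorem theorem15:
  fixes q n :: nat and P :: "nat list set set"
  assumes "q \<ge> 2" and "n \<ge> 1"
    and "partition_on (words q n) P"
    and "lumpable q n P"
  shows "\<exists>K. subgroup K (tree_aut_group q n) \<and> orbits K (words q n) = P"
proof -
  interpret lumpable_partition q n P
    using assms by unfold_locales
  show ?thesis
    using subgroup_part_aut orbits_part_aut by blast
qed

end
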